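(* Let $(M,d)$ be a pointed metric space, let $\gamma\in(0,1]$, let $A\subseteq\widetilde M$, and let $u,v\in M$ with $u\ne v$. Then $A\cup\{(u,v)\}$ is $\gamma$-cyclically monotonic if and only if there exists $f\in B_{\mathrm{Lip}_0(M)}$ such that $f(m_{x,y})\ge\gamma$ for all $(x,y)\in A$, and $f(y)-f(x)+\gamma d(u,v)\le d(x,u)+d(y,v)$ for all $x,y\in\pi(A)$.
   Context: $M$ has base point $0$; $\mathrm{Lip}_0(M)$ is the real Banach space of Lipschitz $f\colon M\to\mathbb R$ with $f(0)=0$, normed by the best Lipschitz constant, with unit ball $B_{\mathrm{Lip}_0(M)}$. $\widetilde M=\{(x,y)\in M\times M:x\ne y\}$ and $f(m_{x,y})=(f(x)-f(y))/d(x,y)$. For $A\subseteq\widetilde M$, $\pi(A)=\{x\in M:\exists y\in M,\ (x,y)\in A\text{ or }(y,x)\in A\}$. For $\gamma\in(0,1]$, $A\subseteq\widetilde M$ is $\gamma$-cyclically monotonic if for every finite sequence $(x_1,y_1),\dots,(x_n,y_n)\in A$, with $y_{n+1}=y_1$, $\sum_{i=1}^n\min\{d(x_i,y_{i+1})-\gamma d(x_i,y_i),\,d(y_i,y_{i+1})\}\ge0$. *)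

theory Defs
  imports "HOL-Analysis.Analysis"
begin

definition tildeM :: "'a set \<Rightarrow> ('a \<times> 'a) set" where
  "tildeM M = {(x, y). x \<in> M \<and> y \<in> M \<and> x \<noteq> y}"

definition proj_pairs :: "('a \<times> 'a) set \<Rightarrow> 'a set" where
  "proj_pairs A = {x. \<exists>y. (x, y) \<in> A \<or> (y, x) \<in> A}"

definition gamma_cyc_mono ::
    "('a \<Rightarrow> 'a \<Rightarrow> real) \<Rightarrow> real \<Rightarrow> ('a \<times> 'a) set \<Rightarrow> bool" where
  "gamma_cyc_mono d \<gamma> A \<longleftrightarrow>
     (\<forall>n::nat. \<forall>x y :: nat \<Rightarrow> 'a. n \<ge> 1 \<longrightarrow> (\<forall>i<n. (x i, y i) \<in> A) \<longrightarrow>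
        0 \<le> (\<Sum>i<n. min (d (x i) (y (Suc i mod n)) - \<gamma> * d (x i) (y i))
                          (d (y i) (y (Suc i mod n)))))"

definition lip0_ball :: "'a set \<Rightarrow> ('a \<Rightarrow> 'a \<Rightarrow> real) \<Rightarrow> 'a \<Rightarrow> ('a \<Rightarrow> real) set" where
  "lip0_ball M d x0 = {f. f x0 = 0 \<and> (\<forall>x\<in>M. \<forall>y\<in>M. \<bar>f x - f y\<bar> \<le> d x y)}"

text \<open>Evaluation of f at the molecule m_{x,y}.\<close>
definition mol :: "('a \<Rightarrow> 'a \<Rightarrow> real) \<Rightarrow> ('a \<Rightarrow> real) \<Rightarrow> 'a \<Rightarrow> 'a \<Rightarrow> real" where
  "mol d f x y = (f x - f y) / d x y"

end

theory Submission
  imports Defs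
begin

text \<open>
  A set \<open>B \<subseteq> M \<times> M\<close> is \<open>\<gamma>\<close>-cyclically monotonic exactly when it has a 1-Lipschitz
  potential \<open>g\<close> with \<open>g x - g y \<ge> \<gamma> d(x,y)\<close> on \<open>B\<close>. Telescoping \<open>g\<close> around a cycle gives one
  direction. For the other, take \<open>-g\<close> to be the infimum of the costs of chains from a base
  point, where jumps cost their length and each pair of \<open>B\<close> traversed backwards earns
  \<open>\<gamma> d(x,y)\<close>; cyclic monotonicity makes closed chains have nonnegative cost, so the
  infimum is finite.

  Applied to \<open>B = A \<union> {(u,v)}\<close>, a potential normalised at \<open>x0\<close> is the required \<open>f\<close>.
  Conversely, \<open>f\<close> restricted to \<open>\<pi>(A)\<close> extends to \<open>\<pi>(A) \<union> {u,v}\<close> keeping the Lipschitz bound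
  and \<open>g u - g v \<ge> \<gamma> d(u,v)\<close>: the inequality assumed of \<open>f\<close> is exactly the compatibility of
  the McShane-type constraints on the two new values.
\<close>

definition nonexpansive_on :: "('a \<Rightarrow> 'a \<Rightarrow> real) \<Rightarrow> 'a set \<Rightarrow> ('a \<Rightarrow> real) \<Rightarrow> bool" where
  "nonexpansive_on d S g \<longleftrightarrow> (\<forall>s\<in>S. \<forall>t\<in>S. \<bar>g s - g t\<bar> \<le> d s t)"

lemma nonexpansive_onD:
  "nonexpansive_on d S g \<Longrightarrow> s \<in> S \<Longrightarrow> t \<in> S \<Longrightarrow> g s - g t \<le> d s t"
  unfolding nonexpansive_on_def by (auto dest!: abs_le_D1)

lemma ex_separating_element:
  fixes L U :: "'a::conditionally_complete_lattice set"
  assumes "L \<noteq> {}" and "U \<noteq> {}" and "\<forall>l\<in>L. \<forall>u\<in>U. l \<le> u"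
  shows "\<exists>c. (\<forall>l\<in>L. l \<le> c) \<and> (\<forall>u\<in>U. c \<le> u)"
proof (intro exI conjI ballI)
  obtain u where "u \<in> U" using assms(2) by blast
  then have "bdd_above L" using assms(3) by (auto intro: bdd_aboveI[of _ u])
  then show "l \<le> Sup L" if "l \<in> L" for l by (rule cSup_upper[OF that])
  show "Sup L \<le> u" if "u \<in> U" for u using assms that by (auto intro: cSup_least)
qed

lemma sum_lessThan_Suc_mod:
  fixes h :: "nat \<Rightarrow> 'b::comm_monoid_add"
  shows "(\<Sum>i<n. h (Suc i mod n)) = (\<Sum>i<n. h i)"
proof (cases n)
  case (Suc m)
  have "(\<Sum>i<Suc m. h (Suc i mod Suc m)) = (\<Sum>i<m. h (Suc i mod Suc m)) + h 0"
    by simp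
  also have "(\<Sum>i<m. h (Suc i mod Suc m)) = (\<Sum>i<m. h (Suc i))"
    by (intro sum.cong) auto
  also have "\<dots> + h 0 = (\<Sum>i<Suc m. h i)"
    by (subst sum.lessThan_Suc_shift) (simp add: add.commute)
  finally show ?thesis using Suc by simp
qed simp

lemma gamma_cyc_mono_if_potential:
  assumes "B \<subseteq> S \<times> S" and "nonexpansive_on d S g"
    and "\<forall>(x, y)\<in>B. \<gamma> * d x y \<le> g x - g y"
  shows "gamma_cyc_mono d \<gamma> B"
  unfolding gamma_cyc_mono_def
proof (intro allI impI)
  fix n :: nat and x y :: "nat \<Rightarrow> 'a"
  assume "1 \<le> n" and chain: "\<forall>i<n. (x i, y i) \<in> B"
  let ?j = "\<lambda>i. Suc i mod n"
  have "g (y i) - g (y (?j i)) \<le> min (d (x i) (y (?j i)) - \<gamma> * d (x i) (y i)) (d (y i) (y (?j i)))"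
    if "i < n" for i
  proof -
    have "?j i < n" using \<open>1 \<le> n\<close> by simp
    then have "(x i, y i) \<in> B" "(x (?j i), y (?j i)) \<in> B" using chain \<open>i < n\<close> by auto
    then have "\<gamma> * d (x i) (y i) \<le> g (x i) - g (y i)"
      and "g (x i) - g (y (?j i)) \<le> d (x i) (y (?j i))"
      and "g (y i) - g (y (?j i)) \<le> d (y i) (y (?j i))"
      using assms by (auto intro: nonexpansive_onD)
    then show ?thesis by simp
  qed
  then have "(\<Sum>i<n. g (y i) - g (y (?j i))) \<le>
      (\<Sum>i<n. min (d (x i) (y (?j i)) - \<gamma> * d (x i) (y i)) (d (y i) (y (?j i))))"
    by (intro sum_mono) simp
  moreover have "(\<Sum>i<n. g (y i) - g (y (?j i))) = 0"
    by (simp add: sum_subtractf sum_lessThan_Suc_mod[of "\<lambda>i. g (y i)"])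
  ultimately show "0 \<le> (\<Sum>i<n. min (d (x i) (y (?j i)) - \<gamma> * d (x i) (y i)) (d (y i) (y (?j i))))"
    by simp
qed

text \<open>
  The cost of the walk \<open>a \<rightarrow> y 0\<close>, \<open>x 0 \<rightarrow> y 1\<close>, \<dots>, \<open>x (n - 1) \<rightarrow> b\<close> along the chain
  \<open>(x i, y i)\<close>, \<open>i < n\<close>, in which each jump costs its length and each pair, traversed from
  \<open>y i\<close> back to \<open>x i\<close>, costs \<open>-\<gamma> d(x i, y i)\<close>.
\<close>
primrec chain_cost ::
    "('a \<Rightarrow> 'a \<Rightarrow> real) \<Rightarrow> real \<Rightarrow> 'a \<Rightarrow> nat \<Rightarrow> (nat \<Rightarrow> 'a) \<Rightarrow> (nat \<Rightarrow> 'a) \<Rightarrow> 'a \<Rightarrow> real" where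
  "chain_cost d \<gamma> a 0 x y b = d a b"
| "chain_cost d \<gamma> a (Suc n) x y b =
     chain_cost d \<gamma> a n x y (y n) - \<gamma> * d (x n) (y n) + d (x n) b"

lemma chain_cost_cong:
  assumes "\<And>i. i < n \<Longrightarrow> x' i = x i" and "\<And>i. i < n \<Longrightarrow> y' i = y i"
  shows "chain_cost d \<gamma> a n x' y' b = chain_cost d \<gamma> a n x y b"
  using assms by (induction n arbitrary: b) simp_all

lemma chain_cost_snoc:
  "chain_cost d \<gamma> a (Suc n) (x(n := p)) (y(n := q)) b = chain_cost d \<gamma> a n x y q - \<gamma> * d p q + d p b"
proof -
  have "chain_cost d \<gamma> a n (x(n := p)) (y(n := q)) q = chain_cost d \<gamma> a n x y q"
    by (rule chain_cost_cong) auto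
  then show ?thesis by simp
qed

lemma chain_cost_eq_sum:
  "chain_cost d \<gamma> a n x y b =
     d a ((y(n := b)) 0) + (\<Sum>i<n. d (x i) ((y(n := b)) (Suc i)) - \<gamma> * d (x i) (y i))"
proof (induction n arbitrary: b)
  case (Suc n)
  have "(\<Sum>i<n. d (x i) ((y(Suc n := b)) (Suc i)) - \<gamma> * d (x i) (y i)) =
      (\<Sum>i<n. d (x i) (y (Suc i)) - \<gamma> * d (x i) (y i))"
    by (intro sum.cong) auto
  then show ?case using Suc[of "y n"] by simp
qed simp

lemma chain_cost_closed_ge:
  assumes "gamma_cyc_mono d \<gamma> B" and "\<forall>i<n. (x i, y i) \<in> B"
  shows "d a (y 0) \<le> chain_cost d \<gamma> a n x y (y 0)"
proof (cases "n = 0")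
  case False
  have "(y(n := y 0)) (Suc i) = y (Suc i mod n)" if "i < n" for i
    using that by (cases "Suc i = n") auto
  then have "chain_cost d \<gamma> a n x y (y 0) =
      d a (y 0) + (\<Sum>i<n. d (x i) (y (Suc i mod n)) - \<gamma> * d (x i) (y i))"
    using False by (simp add: chain_cost_eq_sum)
  moreover have "0 \<le> (\<Sum>i<n. min (d (x i) (y (Suc i mod n)) - \<gamma> * d (x i) (y i))
                                (d (y i) (y (Suc i mod n))))"
    using assms False unfolding gamma_cyc_mono_def by simp
  moreover have "\<dots> \<le> (\<Sum>i<n. d (x i) (y (Suc i mod n)) - \<gamma> * d (x i) (y i))"
    by (intro sum_mono) simp
  ultimately show ?thesis by linarith
qed simp

definition pair_chains :: "('a \<times> 'a) set \<Rightarrow> (nat \<times> (nat \<Rightarrow> 'a) \<times> (nat \<Rightarrow> 'a)) set" where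
  "pair_chains B = {(n, x, y). \<forall>i<n. (x i, y i) \<in> B}"

lemma mem_pair_chains [simp]: "(n, x, y) \<in> pair_chains B \<longleftrightarrow> (\<forall>i<n. (x i, y i) \<in> B)"
  by (simp add: pair_chains_def)

definition inf_chain_cost :: "('a \<Rightarrow> 'a \<Rightarrow> real) \<Rightarrow> real \<Rightarrow> ('a \<times> 'a) set \<Rightarrow> 'a \<Rightarrow> 'a \<Rightarrow> real" where
  "inf_chain_cost d \<gamma> B r z = (INF (n, x, y)\<in>pair_chains B. chain_cost d \<gamma> r n x y z)"

lemma inf_chain_cost_greatest:
  assumes "\<And>n x y. \<forall>i<n. (x i, y i) \<in> B \<Longrightarrow> m \<le> chain_cost d \<gamma> r n x y z"
  shows "m \<le> inf_chain_cost d \<gamma> B r z"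
proof -
  have "pair_chains B \<noteq> {}"
    using mem_pair_chains[of 0 undefined undefined B] by (metis empty_iff less_zeroE)
  then show ?thesis
    unfolding inf_chain_cost_def using assms by (auto intro!: cINF_greatest)
qed

context Metric_space
begin

lemma chain_cost_endpoint_le:
  assumes "\<forall>i<n. x i \<in> M" and "a \<in> M" and "b \<in> M" and "c \<in> M"
  shows "chain_cost d \<gamma> a n x y b \<le> chain_cost d \<gamma> a n x y c + d c b"
proof (cases n)
  case 0
  then show ?thesis using assms triangle[of a c b] by simp
next
  case (Suc m)
  then show ?thesis using assms triangle[of "x m" c b] by simp
qed

lemma chain_cost_ge:
  assumes "B \<subseteq> M \<times> M" and "gamma_cyc_mono d \<gamma> B" and chain: "\<forall>i<n. (x i, y i) \<in> B"
    and "r \<in> M" and "z \<in> M"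
  shows "- d z r \<le> chain_cost d \<gamma> r n x y z"
proof (cases n)
  case 0
  then have "chain_cost d \<gamma> r n x y z = d r z" by simp
  then show ?thesis using nonneg[of z r] nonneg[of r z] by linarith
next
  case (Suc m)
  then have "y 0 \<in> M" and "\<forall>i<n. x i \<in> M" using assms by auto
  have "d r (y 0) \<le> chain_cost d \<gamma> r n x y (y 0)"
    using assms by (intro chain_cost_closed_ge)
  also have "\<dots> \<le> chain_cost d \<gamma> r n x y r + d r (y 0)"
    using chain_cost_endpoint_le \<open>y 0 \<in> M\<close> \<open>\<forall>i<n. x i \<in> M\<close> assms by blast
  also have "\<dots> \<le> chain_cost d \<gamma> r n x y z + d z r + d r (y 0)"
    using chain_cost_endpoint_le \<open>\<forall>i<n. x i \<in> M\<close> assms by fastforce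
  finally show ?thesis by simp
qed

context
  fixes B :: "('a \<times> 'a) set" and \<gamma> :: real and r :: 'a
  assumes B_sub: "B \<subseteq> M \<times> M" and cyc_mono: "gamma_cyc_mono d \<gamma> B" and "r \<in> M"
begin

lemma inf_chain_cost_le:
  assumes "\<forall>i<n. (x i, y i) \<in> B" and "z \<in> M"
  shows "inf_chain_cost d \<gamma> B r z \<le> chain_cost d \<gamma> r n x y z"
proof -
  have "bdd_below ((\<lambda>(n, x, y). chain_cost d \<gamma> r n x y z) ` pair_chains B)"
  proof (rule bdd_belowI)
    fix w assume "w \<in> (\<lambda>(n, x, y). chain_cost d \<gamma> r n x y z) ` pair_chains B"
    then obtain n x y where "\<forall>i<n. (x i, y i) \<in> B" and "w = chain_cost d \<gamma> r n x y z"
      by auto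
    then show "- d z r \<le> w"
      using chain_cost_ge[OF B_sub cyc_mono _ \<open>r \<in> M\<close> \<open>z \<in> M\<close>] by simp
  qed
  moreover have "(n, x, y) \<in> pair_chains B" using assms(1) by simp
  ultimately have "(INF c\<in>pair_chains B. (\<lambda>(n, x, y). chain_cost d \<gamma> r n x y z) c)
      \<le> (\<lambda>(n, x, y). chain_cost d \<gamma> r n x y z) (n, x, y)"
    by (rule cINF_lower)
  then show ?thesis unfolding inf_chain_cost_def by simp
qed

lemma inf_chain_cost_lipschitz:
  assumes "b \<in> M" and "c \<in> M"
  shows "inf_chain_cost d \<gamma> B r b \<le> inf_chain_cost d \<gamma> B r c + d c b"
proof -
  have "inf_chain_cost d \<gamma> B r b - d c b \<le> chain_cost d \<gamma> r n x y c"
    if chain: "\<forall>i<n. (x i, y i) \<in> B" for n x y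
  proof -
    have "\<forall>i<n. x i \<in> M" using chain B_sub by auto
    then have "chain_cost d \<gamma> r n x y b \<le> chain_cost d \<gamma> r n x y c + d c b"
      using \<open>r \<in> M\<close> assms by (rule chain_cost_endpoint_le)
    then show ?thesis using inf_chain_cost_le[OF chain \<open>b \<in> M\<close>] by simp
  qed
  then have "inf_chain_cost d \<gamma> B r b - d c b \<le> inf_chain_cost d \<gamma> B r c"
    by (rule inf_chain_cost_greatest)
  then show ?thesis by simp
qed

lemma inf_chain_cost_pair:
  assumes "(p, q) \<in> B"
  shows "inf_chain_cost d \<gamma> B r p + \<gamma> * d p q \<le> inf_chain_cost d \<gamma> B r q"
proof (rule inf_chain_cost_greatest)
  fix n :: nat and x y assume chain: "\<forall>i<n. (x i, y i) \<in> B"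
  have "p \<in> M" using assms B_sub by auto
  have "\<forall>i<Suc n. ((x(n := p)) i, (y(n := q)) i) \<in> B"
    using chain assms by (auto simp: less_Suc_eq)
  from inf_chain_cost_le[OF this \<open>p \<in> M\<close>]
  show "inf_chain_cost d \<gamma> B r p + \<gamma> * d p q \<le> chain_cost d \<gamma> r n x y q"
    unfolding chain_cost_snoc using \<open>p \<in> M\<close> by simp
qed

end

lemma potential_if_gamma_cyc_mono:
  assumes "B \<subseteq> M \<times> M" and "gamma_cyc_mono d \<gamma> B"
  shows "\<exists>g. nonexpansive_on d M g \<and> (\<forall>(x, y)\<in>B. \<gamma> * d x y \<le> g x - g y)"
proof (cases "M = {}")
  case True
  then show ?thesis using assms(1) by (auto simp: nonexpansive_on_def)
next
  case False
  then obtain r where "r \<in> M" by blast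
  let ?F = "inf_chain_cost d \<gamma> B r"
  show ?thesis
  proof (intro exI[of _ "\<lambda>z. - ?F z"] conjI)
    show "nonexpansive_on d M (\<lambda>z. - ?F z)"
      unfolding nonexpansive_on_def
      using inf_chain_cost_lipschitz[OF assms \<open>r \<in> M\<close>] commute by (force simp: abs_le_iff)
    show "\<forall>(x, y)\<in>B. \<gamma> * d x y \<le> - ?F x - - ?F y"
      using inf_chain_cost_pair[OF assms \<open>r \<in> M\<close>] by fastforce
  qed
qed

lemma potential_pair_compatible:
  assumes "nonexpansive_on d M g" and "u \<in> M" and "v \<in> M" and "x \<in> M" and "y \<in> M"
    and "\<gamma> * d u v \<le> g u - g v"
  shows "g y - g x + \<gamma> * d u v \<le> d x u + d y v"
proof -
  have "g u - g x \<le> d x u" "g y - g v \<le> d y v"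
    using nonexpansive_onD[OF assms(1) \<open>u \<in> M\<close> \<open>x \<in> M\<close>]
      nonexpansive_onD[OF assms(1) \<open>y \<in> M\<close> \<open>v \<in> M\<close>] commute[of u x] by simp_all
  then show ?thesis using assms(6) by linarith
qed

lemma nonexpansive_on_insert:
  assumes "nonexpansive_on d S g" and "\<forall>s\<in>S. \<bar>c - g s\<bar> \<le> d s w"
  shows "nonexpansive_on d (insert w S) (g(w := c))"
  unfolding nonexpansive_on_def
proof (intro ballI)
  fix s t assume "s \<in> insert w S" "t \<in> insert w S"
  then consider "s = w" "t = w" | "s = w" "t \<in> S" "t \<noteq> w" | "s \<in> S" "s \<noteq> w" "t = w"
    | "s \<in> S" "t \<in> S" "s \<noteq> w" "t \<noteq> w"
    by blast
  then show "\<bar>(g(w := c)) s - (g(w := c)) t\<bar> \<le> d s t"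
    by cases (use assms commute in \<open>auto simp: nonexpansive_on_def abs_minus_commute\<close>)
qed

lemma ex_values_at_pair:
  assumes "P \<subseteq> M" and "u \<in> M" and "v \<in> M" and "nonexpansive_on d P f" and "\<gamma> \<le> 1"
    and H: "\<forall>x\<in>P. \<forall>y\<in>P. f y - f x + \<gamma> * d u v \<le> d x u + d y v"
  shows "\<exists>a b. (\<forall>x\<in>P. \<bar>a - f x\<bar> \<le> d x u) \<and> (\<forall>y\<in>P. \<bar>b - f y\<bar> \<le> d y v)
    \<and> \<gamma> * d u v \<le> a - b \<and> a - b \<le> d u v"
proof -
  have "0 \<le> (1 - \<gamma>) * d u v" using \<open>\<gamma> \<le> 1\<close> by simp
  then have \<gamma>_le: "\<gamma> * d u v \<le> d u v" by (simp add: algebra_simps)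
  show ?thesis
  proof (cases "P = {}")
    case True
    then show ?thesis using \<gamma>_le by (intro exI[of _ "d u v"] exI[of _ 0]) simp
  next
    case False
    have compat: "f p - d p w \<le> f q + d q w" if "p \<in> P" "q \<in> P" "w \<in> M" for p q w
    proof -
      have "p \<in> M" "q \<in> M" using that \<open>P \<subseteq> M\<close> by auto
      then show ?thesis
        using nonexpansive_onD[OF assms(4) that(1,2)] triangle[OF \<open>p \<in> M\<close> \<open>w \<in> M\<close> \<open>q \<in> M\<close>]
          commute[of w q] by linarith
    qed
    have compat_uv: "f x - d x u \<le> f y + d y v + d u v" if "x \<in> P" "y \<in> P" for x y
    proof -
      have "d y u \<le> d y v + d u v"
        using triangle[of y v u] commute[of v u] that assms(1-3) by auto
      then show ?thesis using compat[OF that \<open>u \<in> M\<close>] by linarith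
    qed
    have compat_vu: "f y - d y v + \<gamma> * d u v \<le> f x + d x u" if "x \<in> P" "y \<in> P" for x y
    proof -
      have "f y - f x + \<gamma> * d u v \<le> d x u + d y v" using H that by blast
      then show ?thesis by linarith
    qed
    define La where "La = (\<lambda>x. f x - d x u) ` P \<union> (\<lambda>y. f y - d y v + \<gamma> * d u v) ` P"
    define Ua where "Ua = (\<lambda>x. f x + d x u) ` P \<union> (\<lambda>y. f y + d y v + d u v) ` P"
    have "\<forall>l\<in>La. \<forall>w\<in>Ua. l \<le> w"
      unfolding La_def Ua_def
      using compat[OF _ _ \<open>u \<in> M\<close>] compat[OF _ _ \<open>v \<in> M\<close>] compat_uv compat_vu \<gamma>_le
      by (fastforce simp: ball_Un)
    then obtain a where "\<forall>l\<in>La. l \<le> a" "\<forall>w\<in>Ua. a \<le> w"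
      using ex_separating_element[of La Ua] False unfolding La_def Ua_def by blast
    then have a_u: "\<forall>x\<in>P. f x - d x u \<le> a \<and> a \<le> f x + d x u"
      and a_v: "\<forall>y\<in>P. f y - d y v + \<gamma> * d u v \<le> a \<and> a \<le> f y + d y v + d u v"
      unfolding La_def Ua_def by auto
    define Lb where "Lb = (\<lambda>y. f y - d y v) ` P \<union> {a - d u v}"
    define Ub where "Ub = (\<lambda>y. f y + d y v) ` P \<union> {a - \<gamma> * d u v}"
    have "\<forall>l\<in>Lb. \<forall>w\<in>Ub. l \<le> w"
      unfolding Lb_def Ub_def using compat[OF _ _ \<open>v \<in> M\<close>] a_v \<gamma>_le
      by (fastforce simp: ball_Un)
    then obtain b where "\<forall>l\<in>Lb. l \<le> b" "\<forall>w\<in>Ub. b \<le> w"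
      using ex_separating_element[of Lb Ub] unfolding Lb_def Ub_def by blast
    then have "\<forall>y\<in>P. f y - d y v \<le> b \<and> b \<le> f y + d y v" "a - d u v \<le> b" "b \<le> a - \<gamma> * d u v"
      unfolding Lb_def Ub_def by auto
    then show ?thesis
      using a_u by (intro exI[of _ a] exI[of _ b]) (auto simp: abs_le_iff)
  qed
qed

lemma nonexpansive_extension_to_pair:
  assumes "P \<subseteq> M" and "u \<in> M" and "v \<in> M" and "nonexpansive_on d P f"
    and "0 \<le> \<gamma>" and "\<gamma> \<le> 1"
    and "\<forall>x\<in>P. \<forall>y\<in>P. f y - f x + \<gamma> * d u v \<le> d x u + d y v"
  shows "\<exists>g. nonexpansive_on d (insert v (insert u P)) g \<and> (\<forall>x\<in>P. g x = f x)
    \<and> \<gamma> * d u v \<le> g u - g v"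
proof -
  obtain a b where a: "\<forall>x\<in>P. \<bar>a - f x\<bar> \<le> d x u" and b: "\<forall>y\<in>P. \<bar>b - f y\<bar> \<le> d y v"
    and ab: "\<gamma> * d u v \<le> a - b" "a - b \<le> d u v"
    using ex_values_at_pair[OF assms(1-4,6,7)] by blast
  define g where "g = f(u := a, v := b)"
  have f_u: "nonexpansive_on d (insert u P) (f(u := a))"
    using assms(4) a by (rule nonexpansive_on_insert)
  have "0 \<le> \<gamma> * d u v" using \<open>0 \<le> \<gamma>\<close> by simp
  then have "\<bar>b - a\<bar> \<le> d u v" unfolding abs_le_iff using ab by linarith
  then have "\<forall>s\<in>insert u P. \<bar>b - (f(u := a)) s\<bar> \<le> d s v" using b by simp
  then have "nonexpansive_on d (insert v (insert u P)) g"
    unfolding g_def by (rule nonexpansive_on_insert[OF f_u])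
  moreover have "g x = f x" if "x \<in> P" for x
  proof -
    have "d x x = 0" using that \<open>P \<subseteq> M\<close> by auto
    moreover have "\<bar>a - f x\<bar> \<le> d x u" "\<bar>b - f x\<bar> \<le> d x v" using a b that by auto
    ultimately have "x = u \<Longrightarrow> a = f x" "x = v \<Longrightarrow> b = f x" by auto
    then show ?thesis unfolding g_def by simp
  qed
  moreover have "\<gamma> * d u v \<le> g u - g v"
    using ab(1) \<open>u \<in> M\<close> unfolding g_def by (cases "u = v") simp_all
  ultimately show ?thesis by blast
qed

end

lemma mol_ge_iff: "0 < d x y \<Longrightarrow> \<gamma> \<le> mol d f x y \<longleftrightarrow> \<gamma> * d x y \<le> f x - f y"
  by (simp add: mol_def pos_le_divide_eq)

theorem lemma3p3:
  fixes M :: "'a set" and d :: "'a \<Rightarrow> 'a \<Rightarrow> real" and x0 :: 'a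
    and \<gamma> :: real and A :: "('a \<times> 'a) set" and u v :: 'a
  assumes "Metric_space M d"
    and "x0 \<in> M"
    and "0 < \<gamma>" and "\<gamma> \<le> 1"
    and "A \<subseteq> tildeM M"
    and "u \<in> M" and "v \<in> M" and "u \<noteq> v"
  shows "gamma_cyc_mono d \<gamma> (A \<union> {(u, v)}) \<longleftrightarrow>
    (\<exists>f \<in> lip0_ball M d x0.
        (\<forall>(x, y) \<in> A. \<gamma> \<le> mol d f x y) \<and>
        (\<forall>x \<in> proj_pairs A. \<forall>y \<in> proj_pairs A.
            f y - f x + \<gamma> * d u v \<le> d x u + d y v))"
proof -
  interpret Metric_space M d by fact
  define P where "P = proj_pairs A"
  have A_sub: "A \<subseteq> P \<times> P" and "P \<subseteq> M"
    using \<open>A \<subseteq> tildeM M\<close> by (auto simp: P_def proj_pairs_def tildeM_def)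
  have mol_iff: "\<gamma> \<le> mol d f x y \<longleftrightarrow> \<gamma> * d x y \<le> f x - f y" if "(x, y) \<in> A" for f x y
    using that \<open>A \<subseteq> tildeM M\<close> by (intro mol_ge_iff mdist_pos_less) (auto simp: tildeM_def)
  have B_sub: "A \<union> {(u, v)} \<subseteq> insert v (insert u P) \<times> insert v (insert u P)"
    using A_sub by auto
  show ?thesis
    unfolding P_def[symmetric]
  proof (rule iffI, goal_cases)
    case 1
    have "A \<union> {(u, v)} \<subseteq> M \<times> M" using B_sub \<open>P \<subseteq> M\<close> assms(6,7) by blast
    then obtain g where g: "nonexpansive_on d M g"
      and g_pairs: "\<forall>(x, y)\<in>A \<union> {(u, v)}. \<gamma> * d x y \<le> g x - g y"
      using potential_if_gamma_cyc_mono 1 by blast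
    have "(\<lambda>z. g z - g x0) \<in> lip0_ball M d x0"
      using g by (simp add: lip0_ball_def nonexpansive_on_def)
    moreover have "g y - g x + \<gamma> * d u v \<le> d x u + d y v" if "x \<in> P" "y \<in> P" for x y
      using potential_pair_compatible[OF g assms(6,7)] g_pairs that \<open>P \<subseteq> M\<close> by auto
    ultimately show ?case
      using g_pairs mol_iff by (intro bexI[of _ "\<lambda>z. g z - g x0"]) auto
  next
    case 2
    then obtain f where "f \<in> lip0_ball M d x0" and f_mol: "\<forall>(x, y) \<in> A. \<gamma> \<le> mol d f x y"
      and f_uv: "\<forall>x \<in> P. \<forall>y \<in> P. f y - f x + \<gamma> * d u v \<le> d x u + d y v"
      by blast
    have "nonexpansive_on d P f"
      using \<open>f \<in> lip0_ball M d x0\<close> \<open>P \<subseteq> M\<close> unfolding lip0_ball_def nonexpansive_on_def by blast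
    then obtain g where g: "nonexpansive_on d (insert v (insert u P)) g"
      and g_f: "\<forall>x\<in>P. g x = f x" and g_uv: "\<gamma> * d u v \<le> g u - g v"
      using nonexpansive_extension_to_pair[OF \<open>P \<subseteq> M\<close> assms(6,7) _ _ assms(4) f_uv] assms(3)
      by auto
    have "\<forall>(x, y)\<in>A \<union> {(u, v)}. \<gamma> * d x y \<le> g x - g y"
      using f_mol mol_iff g_f g_uv A_sub by fastforce
    then show ?case by (rule gamma_cyc_mono_if_potential[OF B_sub g])
  qed
qed

end
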